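(* Let $\mathcal{A}=\mathcal{R}*_K\mathcal{S}*_L\mathcal{T}\in\mathbb{C}^{I_1\times\cdots\times I_N\times J_1\times\cdots\times J_M}$, where $\mathcal{R}\in\mathbb{C}^{I_1\times\cdots\times I_N\times H_1\times\cdots\times H_K}$, $\mathcal{S}\in\mathbb{C}^{H_1\times\cdots\times H_K\times G_1\times\cdots\times G_L}$ and $\mathcal{T}\in\mathbb{C}^{G_1\times\cdots\times G_L\times J_1\times\cdots\times J_M}$. Then $$\mathcal{A}^{\dagger}=(\mathcal{R}*_K\mathcal{S}*_L\mathcal{T})^{\dagger}=(\mathcal{R}^{\dagger}*_N\mathcal{A})^{\dagger}*_K\mathcal{R}^{\dagger}*_N\mathcal{A}*_M\mathcal{T}^{\dagger}*_L(\mathcal{A}*_M\mathcal{T}^{\dagger})^{\dagger}=(\mathcal{R}^{\dagger}*_N\mathcal{A})^{\dagger}*_K\mathcal{S}*_L(\mathcal{A}*_M\mathcal{T}^{\dagger})^{\dagger}.$$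
   Context: $\mathbb{C}^{I_1\times\cdots\times I_N}$ denotes the set of complex tensors of order $N$ and dimension $I_1\times\cdots\times I_N$. For $\mathcal{A}\in\mathbb{C}^{I_1\times\cdots\times I_N\times K_1\times\cdots\times K_N}$ and $\mathcal{B}\in\mathbb{C}^{K_1\times\cdots\times K_N\times J_1\times\cdots\times J_M}$, the Einstein product $\mathcal{A}*_N\mathcal{B}$ is defined by $(\mathcal{A}*_N\mathcal{B})_{i_1\dots i_N j_1\dots j_M}=\sum_{k_1,\dots,k_N}a_{i_1\dots i_N k_1\dots k_N}b_{k_1\dots k_N j_1\dots j_M}$; it is associative. $\mathcal{A}^H$ denotes the conjugate transpose (swap the two groups of indices and conjugate entries). For $\mathcal{A}\in\mathbb{C}^{I_1\times\cdots\times I_N\times J_1\times\cdots\times J_M}$ the Moore–Penrose inverse $\mathcal{A}^{\dagger}$ is the unique $\mathcal{X}\in\mathbb{C}^{J_1\times\cdots\times J_M\times I_1\times\cdots\times I_N}$ with $\mathcal{A}*_M\mathcal{X}*_N\mathcal{A}=\mathcal{A}$, $\mathcal{X}*_N\mathcal{A}*_M\mathcal{X}=\mathcal{X}$, $(\mathcal{A}*_M\mathcal{X})^H=\mathcal{A}*_M\mathcal{X}$, $(\mathcal{X}*_N\mathcal{A})^H=\mathcal{X}*_N\mathcal{A}$. *)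

theory Defs
  imports Complex_Main
begin

definition idx :: "nat list \<Rightarrow> nat list set" where
  "idx ds = {is. length is = length ds \<and> (\<forall>k < length ds. is ! k < ds ! k)}"

text \<open>A tensor in C^(I_1 x ... x I_N x J_1 x ... x J_M), stored as a function of the
  two index groups, zero outside the index range.\<close>
definition tensor :: "nat list \<Rightarrow> nat list \<Rightarrow> (nat list \<Rightarrow> nat list \<Rightarrow> complex) set" where
  "tensor I J = {A. \<forall>is js. (is \<notin> idx I \<or> js \<notin> idx J) \<longrightarrow> A is js = 0}"

definition ein :: "nat list \<Rightarrow> (nat list \<Rightarrow> nat list \<Rightarrow> complex) \<Rightarrow>
    (nat list \<Rightarrow> nat list \<Rightarrow> complex) \<Rightarrow> (nat list \<Rightarrow> nat list \<Rightarrow> complex)" where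
  "ein K A B = (\<lambda>is js. \<Sum>ks\<in>idx K. A is ks * B ks js)"

definition ctr :: "(nat list \<Rightarrow> nat list \<Rightarrow> complex) \<Rightarrow> (nat list \<Rightarrow> nat list \<Rightarrow> complex)" where
  "ctr A = (\<lambda>is js. cnj (A js is))"

definition is_mp :: "nat list \<Rightarrow> nat list \<Rightarrow> (nat list \<Rightarrow> nat list \<Rightarrow> complex) \<Rightarrow>
    (nat list \<Rightarrow> nat list \<Rightarrow> complex) \<Rightarrow> bool" where
  "is_mp I J A X \<longleftrightarrow> X \<in> tensor J I \<and>
     ein I (ein J A X) A = A \<and>
     ein J (ein I X A) X = X \<and>
     ctr (ein J A X) = ein J A X \<and>
     ctr (ein I X A) = ein I X A"

definition mpinv :: "nat list \<Rightarrow> nat list \<Rightarrow> (nat list \<Rightarrow> nat list \<Rightarrow> complex) \<Rightarrow>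
    (nat list \<Rightarrow> nat list \<Rightarrow> complex)" where
  "mpinv I J A = (THE X. is_mp I J A X)"

end

(* Write A^+ for the Moore-Penrose inverse. By uniqueness it suffices to check the four Penrose
   equations for Z = (R^+ A)^+ R^+ A T^+ (A T^+)^+, and these only use A = R (R^+ A) = (A T^+) T.
   Z equals (R^+ A)^+ S (A T^+)^+ because (R^+ A)^+ absorbs the Hermitian idempotent R^+ R on the
   right and (A T^+)^+ absorbs T T^+ on the left.

   Since mpinv is a definite description, existence of A^+ must be proved as well:
   A^+ = (A^H A)^+ A^H, and a Hermitian H has the Hermitian Moore-Penrose inverse H B B, where
   B is a polynomial in H with H H B = H. Such a B comes from a linear dependence among the powers of H, after
   cancelling its lowest power with the help of: H^(k+1) Y = 0 implies H Y = 0 for Hermitian H. *)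

theory Submission
  imports Defs "HOL-Library.Function_Algebras"
begin

section \<open>Algebra of the Einstein product\<close>

type_synonym ctensor = "nat list \<Rightarrow> nat list \<Rightarrow> complex"

lemma sum_fun_apply: "sum f S x = (\<Sum>i\<in>S. f i x)"
  by (induction S rule: infinite_finite_induct) auto

lemma finite_idx: "finite (idx ds)"
proof (rule finite_subset)
  show "idx ds \<subseteq> {xs. set xs \<subseteq> {..<sum_list ds} \<and> length xs = length ds}"
    by (auto simp: idx_def in_set_conv_nth) (metis elem_le_sum_list order_less_le_trans)
qed (rule finite_lists_length_eq, simp)

lemma ein_assoc: "ein L (ein K A B) C = ein K A (ein L B C)"
  by (auto simp: ein_def fun_eq_iff sum_distrib_left sum_distrib_right mult.assoc intro: sum.swap)

lemma ctr_ctr [simp]: "ctr (ctr A) = A"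
  by (simp add: ctr_def)

lemma ctr_ein: "ctr (ein K A B) = ein K (ctr B) (ctr A)"
  by (simp add: ctr_def ein_def fun_eq_iff mult.commute)

lemma ctr_diff: "ctr (A - B) = ctr A - ctr B"
  by (simp add: ctr_def fun_eq_iff)

lemma ein_in_tensor: "A \<in> tensor I K \<Longrightarrow> B \<in> tensor L J \<Longrightarrow> ein M A B \<in> tensor I J"
  by (auto simp: tensor_def ein_def)

lemma ctr_in_tensor: "A \<in> tensor I J \<Longrightarrow> ctr A \<in> tensor J I"
  by (auto simp: tensor_def ctr_def)

lemma diff_in_tensor: "A \<in> tensor I J \<Longrightarrow> B \<in> tensor I J \<Longrightarrow> A - B \<in> tensor I J"
  by (auto simp: tensor_def)

lemma ein_diff_left: "ein K (A - B) C = ein K A C - ein K B C"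
  by (simp add: ein_def fun_eq_iff algebra_simps sum_subtractf)

lemma ein_diff_right: "ein K A (B - C) = ein K A B - ein K A C"
  by (simp add: ein_def fun_eq_iff algebra_simps sum_subtractf)

lemma ein_zero_right [simp]: "ein K A 0 = 0"
  by (simp add: ein_def fun_eq_iff)

lemma ein_sum_left: "ein K (\<Sum>k\<in>S. F k) B = (\<Sum>k\<in>S. ein K (F k) B)"
  by (simp add: ein_def fun_eq_iff sum_fun_apply sum_distrib_right sum.swap[where B = "idx K"])

lemma ein_sum_right: "ein K A (\<Sum>k\<in>S. F k) = (\<Sum>k\<in>S. ein K A (F k))"
  by (simp add: ein_def fun_eq_iff sum_fun_apply sum_distrib_left sum.swap[where B = "idx K"])

lemma ein_ctr_self_eq_0:
  assumes "W \<in> tensor I J" and "ein I (ctr W) W = 0"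
  shows "W = 0"
proof -
  have "W i j = 0" for i j
  proof -
    have "complex_of_real (\<Sum>k\<in>idx I. (cmod (W k j))\<^sup>2) = ein I (ctr W) W j j"
      by (simp only: of_real_sum complex_norm_square) (simp add: ein_def ctr_def mult.commute)
    then have "(\<Sum>k\<in>idx I. (cmod (W k j))\<^sup>2) = 0"
      using assms(2) by (simp only: zero_fun_apply of_real_eq_0_iff)
    then have "\<forall>k\<in>idx I. W k j = 0"
      by (simp add: sum_nonneg_eq_0_iff finite_idx)
    then show ?thesis
      using assms(1) by (cases "i \<in> idx I") (auto simp: tensor_def)
  qed
  then show ?thesis
    by (simp add: fun_eq_iff)
qed

definition tensor_id :: "nat list \<Rightarrow> ctensor" where
  "tensor_id J = (\<lambda>i j. if i \<in> idx J \<and> j = i then 1 else 0)"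

lemma tensor_id_in_tensor: "tensor_id J \<in> tensor J J"
  by (auto simp: tensor_id_def tensor_def)

lemma ein_tensor_id_left:
  assumes "A \<in> tensor J K"
  shows "ein J (tensor_id J) A = A"
proof (intro ext)
  fix i k
  have "ein J (tensor_id J) A i k = (\<Sum>j\<in>idx J. if j = i then A i k else 0)"
    unfolding ein_def tensor_id_def by (rule sum.cong) auto
  then show "ein J (tensor_id J) A i k = A i k"
    using assms by (auto simp: tensor_def finite_idx)
qed

lemma ein_tensor_id_right:
  assumes "A \<in> tensor I J"
  shows "ein J A (tensor_id J) = A"
proof (intro ext)
  fix i k
  have "ein J A (tensor_id J) i k = (\<Sum>j\<in>idx J. if j = k then A i k else 0)"
    unfolding ein_def tensor_id_def by (rule sum.cong) auto
  then show "ein J A (tensor_id J) i k = A i k"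
    using assms by (auto simp: tensor_def finite_idx)
qed

section \<open>Uniqueness and existence of the Moore--Penrose inverse\<close>

lemma is_mp_unique:
  assumes "is_mp I J A X" and "is_mp I J A Y"
  shows "X = Y"
proof -
  from assms(1) have X1: "ein I (ein J A X) A = A" and X2: "ein J (ein I X A) X = X"
    and X3: "ctr (ein J A X) = ein J A X" and X4: "ctr (ein I X A) = ein I X A"
    by (simp_all add: is_mp_def)
  from assms(2) have Y1: "ein I (ein J A Y) A = A" and Y2: "ein J (ein I Y A) Y = Y"
    and Y3: "ctr (ein J A Y) = ein J A Y" and Y4: "ctr (ein I Y A) = ein I Y A"
    by (simp_all add: is_mp_def)
  have AX: "ein J A X = ein J A Y"
  proof -
    have "ein J A X = ein I (ein J A Y) (ein J A X)"
      by (simp add: Y1 flip: ein_assoc)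
    also have "\<dots> = ctr (ein I (ein J A X) (ein J A Y))"
      by (subst ctr_ein) (simp only: X3 Y3)
    also have "\<dots> = ein J A Y"
      by (simp add: X1 Y3 flip: ein_assoc)
    finally show ?thesis .
  qed
  have XA: "ein I X A = ein I Y A"
  proof -
    have "ein I X A = ein J (ein I X A) (ein I Y A)"
      using Y1 by (simp add: ein_assoc)
    also have "\<dots> = ctr (ein J (ein I Y A) (ein I X A))"
      by (subst ctr_ein) (simp only: X4 Y4)
    also have "\<dots> = ein I Y A"
      using X1 Y4 by (simp add: ein_assoc)
    finally show ?thesis .
  qed
  have "X = ein J (ein I Y A) X"
    using X2 by (simp add: XA)
  also have "\<dots> = Y"
    using Y2 by (simp add: ein_assoc AX)
  finally show ?thesis .
qed

primrec tpow :: "nat list \<Rightarrow> ctensor \<Rightarrow> nat \<Rightarrow> ctensor" where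
  "tpow J H 0 = tensor_id J"
| "tpow J H (Suc k) = ein J H (tpow J H k)"

lemma tpow_in_tensor: "H \<in> tensor J J \<Longrightarrow> tpow J H k \<in> tensor J J"
  by (induction k) (auto simp: tensor_id_in_tensor intro: ein_in_tensor)

lemma tpow_1: "H \<in> tensor J J \<Longrightarrow> tpow J H 1 = H"
  by (simp add: ein_tensor_id_right)

lemma tpow_add: "H \<in> tensor J J \<Longrightarrow> tpow J H (k + l) = ein J (tpow J H k) (tpow J H l)"
  by (induction k) (simp_all add: ein_tensor_id_left[OF tpow_in_tensor] ein_assoc)

lemma tpow_commute: "H \<in> tensor J J \<Longrightarrow> ein J H (tpow J H k) = ein J (tpow J H k) H"
  by (metis tpow_add tpow_1 add.commute)

definition tscale :: "complex \<Rightarrow> ctensor \<Rightarrow> ctensor" where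
  "tscale c A = (\<lambda>i j. c * A i j)"

interpretation tensor_space: vector_space tscale
  by unfold_locales (auto simp: tscale_def fun_eq_iff algebra_simps)

lemma ein_tscale_left: "ein K (tscale c A) B = tscale c (ein K A B)"
  by (simp add: ein_def tscale_def fun_eq_iff sum_distrib_left mult.assoc)

lemma ein_tscale_right: "ein K A (tscale c B) = tscale c (ein K A B)"
  by (simp add: ein_def tscale_def fun_eq_iff sum_distrib_left algebra_simps)

lemma tscale_in_tensor: "A \<in> tensor I J \<Longrightarrow> tscale c A \<in> tensor I J"
  by (simp add: tscale_def tensor_def)

lemma sum_in_tensor: "(\<And>k. k \<in> S \<Longrightarrow> F k \<in> tensor I J) \<Longrightarrow> (\<Sum>k\<in>S. F k) \<in> tensor I J"
  by (auto simp: tensor_def sum_fun_apply)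

definition unit_tensor :: "nat list \<Rightarrow> nat list \<Rightarrow> ctensor" where
  "unit_tensor a b = (\<lambda>i j. if i = a \<and> j = b then 1 else 0)"

lemma tensor_subset_span_unit_tensors:
  "tensor I J \<subseteq> tensor_space.span (case_prod unit_tensor ` (idx I \<times> idx J))"
proof
  fix A assume A: "A \<in> tensor I J"
  have "A = (\<Sum>(a, b)\<in>idx I \<times> idx J. tscale (A a b) (unit_tensor a b))"
  proof (intro ext)
    fix i j
    have "(\<Sum>(a, b)\<in>idx I \<times> idx J. tscale (A a b) (unit_tensor a b)) i j
        = (\<Sum>p\<in>idx I \<times> idx J. if p = (i, j) then A i j else 0)"
      by (auto simp: sum_fun_apply tscale_def unit_tensor_def intro!: sum.cong)
    then show "A i j = (\<Sum>(a, b)\<in>idx I \<times> idx J. tscale (A a b) (unit_tensor a b)) i j"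
      using A by (auto simp: tensor_def finite_idx)
  qed
  also have "\<dots> \<in> tensor_space.span (case_prod unit_tensor ` (idx I \<times> idx J))"
    by (intro tensor_space.span_sum) (auto intro!: tensor_space.span_scale[OF tensor_space.span_base])
  finally show "A \<in> tensor_space.span (case_prod unit_tensor ` (idx I \<times> idx J))" .
qed

lemma tpow_linear_dependent:
  assumes "H \<in> tensor J J"
  obtains n c k where "k \<le> n" and "c k \<noteq> 0" and "(\<Sum>l\<le>n. tscale (c l) (tpow J H l)) = 0"
proof -
  define E where "E = case_prod unit_tensor ` (idx J \<times> idx J)"
  define N where "N = card (idx J \<times> idx J)"
  show thesis
  proof (cases "inj_on (tpow J H) {..N}")
    case True
    have "tensor_space.dependent (tpow J H ` {..N})"
    proof (rule ccontr)
      assume indep: "tensor_space.independent (tpow J H ` {..N})"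
      have "tpow J H ` {..N} \<subseteq> tensor_space.span E"
        using tensor_subset_span_unit_tensors tpow_in_tensor[OF assms] unfolding E_def by blast
      then have "card (tpow J H ` {..N}) \<le> card E"
        using tensor_space.independent_span_bound indep by (simp add: E_def finite_idx)
      also have "\<dots> \<le> N"
        unfolding E_def N_def by (rule card_image_le) (simp add: finite_idx)
      finally show False
        using True by (simp add: card_image)
    qed
    then obtain u where "(\<Sum>v\<in>tpow J H ` {..N}. tscale (u v) v) = 0" and "\<exists>v\<in>tpow J H ` {..N}. u v \<noteq> 0"
      using tensor_space.dependent_finite by blast
    then show thesis
      using that[of _ N "\<lambda>l. u (tpow J H l)"] True by (auto simp: sum.reindex)
  next
    case False
    then obtain a b where "a \<le> N" "b \<le> N" "a \<noteq> b" "tpow J H a = tpow J H b"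
      by (auto simp: inj_on_def)
    then show thesis
      using that[of a N "\<lambda>l. of_bool (l = a) - of_bool (l = b)"]
      by (simp add: tensor_space.scale_left_diff_distrib sum_subtractf of_bool_def
          if_distrib[of "\<lambda>c. tscale c _"] cong: if_cong)
  qed
qed

lemma tpow_annihilator_unit_coeff:
  assumes H: "H \<in> tensor J J"
  obtains m n c where "c 0 \<noteq> 0" and "ein J (tpow J H m) (\<Sum>k\<le>n. tscale (c k) (tpow J H k)) = 0"
proof -
  obtain n c k0 where "k0 \<le> n" and "c k0 \<noteq> 0" and rel: "(\<Sum>k\<le>n. tscale (c k) (tpow J H k)) = 0"
    using tpow_linear_dependent[OF H] .
  define m where "m = (LEAST k. c k \<noteq> 0)"
  have cm: "c m \<noteq> 0" and "m \<le> k0"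
    using LeastI[of "\<lambda>k. c k \<noteq> 0", OF \<open>c k0 \<noteq> 0\<close>] Least_le[of "\<lambda>k. c k \<noteq> 0", OF \<open>c k0 \<noteq> 0\<close>]
    by (simp_all add: m_def)
  have below: "c k = 0" if "k < m" for k
    using not_less_Least[OF that[unfolded m_def]] by simp
  have "ein J (tpow J H m) (\<Sum>l\<le>n - m. tscale (c (l + m)) (tpow J H l))
      = (\<Sum>l\<in>{0..n - m}. tscale (c (l + m)) (tpow J H (l + m)))"
    by (simp add: ein_sum_right ein_tscale_right tpow_add[OF H, symmetric] add.commute atLeast0AtMost)
  also have "\<dots> = (\<Sum>k\<in>{m..n}. tscale (c k) (tpow J H k))"
    using sum.shift_bounds_cl_nat_ivl[of "\<lambda>k. tscale (c k) (tpow J H k)" 0 m "n - m"]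
      \<open>m \<le> k0\<close> \<open>k0 \<le> n\<close> by simp
  also have "\<dots> = (\<Sum>k\<le>n. tscale (c k) (tpow J H k))"
    by (rule sum.mono_neutral_left) (auto simp: below)
  finally show thesis
    using that[of "\<lambda>l. c (l + m)"] cm rel by simp
qed

lemma hermitian_tpow_ein_eq_0:
  assumes H: "H \<in> tensor J J" "ctr H = H" and "Y \<in> tensor J K"
    and "ein J (tpow J H (Suc k)) Y = 0"
  shows "ein J H Y = 0"
  using assms(3,4)
proof (induction k arbitrary: Y)
  case 0
  then show ?case
    by (simp add: ein_tensor_id_right[OF H(1)])
next
  case (Suc k)
  have "ein J (tpow J H (Suc k)) (ein J H Y) = 0"
    using Suc.prems(2) by (simp only: tpow.simps(2)[of J H "Suc k"] tpow_commute[OF H(1)] ein_assoc)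
  then have HHY: "ein J H (ein J H Y) = 0"
    by (rule Suc.IH[OF ein_in_tensor[OF H(1) Suc.prems(1)]])
  show ?case
    \<comment> \<open>ctr (H Y) * H Y = ctr Y * (H H Y) = 0\<close>
    by (rule ein_ctr_self_eq_0[OF ein_in_tensor[OF H(1) Suc.prems(1)]])
      (simp add: ctr_ein H(2) ein_assoc HHY)
qed

lemma hermitian_group_inverse_exists:
  assumes H: "H \<in> tensor J J" "ctr H = H"
  obtains B where "B \<in> tensor J J" and "ein J H B = ein J B H" and "ein J H (ein J H B) = H"
proof -
  obtain m n c where c0: "c 0 \<noteq> 0"
    and rel: "ein J (tpow J H m) (\<Sum>k\<le>n. tscale (c k) (tpow J H k)) = 0"
    using tpow_annihilator_unit_coeff[OF H(1)] .
  define Z where "Z = (\<Sum>k\<le>n. tscale (c k) (tpow J H k))"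
  define Q where "Q = (\<Sum>k<n. tscale (c (Suc k)) (tpow J H k))"
  have Z: "Z \<in> tensor J J" and Q: "Q \<in> tensor J J"
    unfolding Z_def Q_def by (auto intro!: sum_in_tensor tscale_in_tensor tpow_in_tensor H(1))
  have HZ: "ein J H Z = 0"
  proof (cases m)
    case 0
    then show ?thesis
      using rel by (simp add: Z_def[symmetric] ein_tensor_id_left[OF Z])
  next
    case (Suc k)
    then show ?thesis
      using hermitian_tpow_ein_eq_0[OF H Z] rel by (simp add: Z_def)
  qed
  have "ein J H Z = (\<Sum>k\<le>n. tscale (c k) (tpow J H (Suc k)))"
    by (simp add: Z_def ein_sum_right ein_tscale_right)
  also have "\<dots> = tscale (c 0) H + ein J H (ein J H Q)"
    by (simp add: sum.atMost_shift Q_def ein_sum_right ein_tscale_right ein_tensor_id_right[OF H(1)])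
  finally have HHQ: "ein J H (ein J H Q) = - tscale (c 0) H"
    by (simp add: HZ add_eq_0_iff)
  have HQ: "ein J H Q = ein J Q H"
    by (simp add: Q_def ein_tscale_left ein_tscale_right ein_sum_left ein_sum_right tpow_commute[OF H(1)])
  define B where "B = tscale (- 1 / c 0) Q"
  show thesis
  proof (rule that)
    show "B \<in> tensor J J"
      unfolding B_def by (rule tscale_in_tensor[OF Q])
    show "ein J H B = ein J B H"
      by (simp only: B_def ein_tscale_left ein_tscale_right HQ)
    show "ein J H (ein J H B) = H"
      unfolding B_def ein_tscale_right HHQ using c0 by (simp add: tscale_def fun_eq_iff)
  qed
qed

lemma hermitian_is_mp_exists:
  assumes H: "H \<in> tensor J J" "ctr H = H"
  obtains G where "is_mp J J H G" and "ctr G = G"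
proof -
  obtain B where B: "B \<in> tensor J J" and HB: "ein J H B = ein J B H" and HHB: "ein J H (ein J H B) = H"
    using hermitian_group_inverse_exists[OF H] .
  define E where "E = ein J H B"
  have HE: "ein J H E = H"
    using HHB by (simp add: E_def)
  have BH: "ein J B H = E"
    using HB by (simp add: E_def)
  have EH: "ein J E H = H"
    using HE by (simp add: E_def ein_assoc BH[unfolded E_def])
  have "ein J (ctr E) H = H"
    using arg_cong[OF HE, of ctr] by (simp add: ctr_ein H(2))
  then have E_proj: "ein J (ctr E) E = E"
    by (simp add: E_def flip: ein_assoc)
  then have E_herm: "ctr E = E"
    by (metis ctr_ctr ctr_ein)
  have EE: "ein J E E = E"
    using E_proj by (simp add: E_herm)
  have BhH: "ein J (ctr B) H = E"
    using arg_cong[OF E_def, of ctr] by (simp add: ctr_ein H(2) E_herm)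
  \<comment> \<open>E is the orthogonal projection onto the range of H, and G = H B B its group inverse\<close>
  define G where "G = ein J E B"
  show thesis
  proof (rule that)
    have "ctr G = ein J (ctr B) E"
      by (simp add: G_def ctr_ein E_herm)
    also have "\<dots> = G"
      by (metis BhH E_def G_def ein_assoc)
    finally show "ctr G = G" .
    have HG: "ein J H G = E"
      by (simp add: G_def HE flip: ein_assoc) (simp add: E_def)
    have GH: "ein J G H = E"
      by (simp add: G_def BH EE ein_assoc)
    show "is_mp J J H G"
      unfolding is_mp_def
    proof (intro conjI)
      show "G \<in> tensor J J"
        unfolding G_def E_def by (rule ein_in_tensor[OF ein_in_tensor[OF H(1) B] B])
      show "ein J (ein J G H) G = G"
        unfolding GH by (simp add: G_def EE flip: ein_assoc)
    qed (simp_all add: HG GH EH E_herm)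
  qed
qed

lemma is_mp_gram:
  assumes A: "A \<in> tensor I J"
    and G: "is_mp J J (ein I (ctr A) A) G" and G_herm: "ctr G = G"
  shows "is_mp I J A (ein J G (ctr A))"
proof -
  define H where "H = ein I (ctr A) A"
  have H_tensor: "H \<in> tensor J J"
    unfolding H_def by (rule ein_in_tensor[OF ctr_in_tensor[OF A] A])
  have H_herm: "ctr H = H"
    by (simp add: H_def ctr_ein)
  from G have G_tensor: "G \<in> tensor J J" and HGH: "ein J (ein J H G) H = H"
    and GHG: "ein J (ein J G H) G = G" and HG_herm: "ctr (ein J H G) = ein J H G"
    by (simp_all add: is_mp_def H_def)
  have GH: "ein J G H = ein J H G"
    using HG_herm by (simp add: ctr_ein H_herm G_herm)
  have A_ctr_A: "ein I (ctr A) (ein J A X) = ein J H X" for X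
    by (simp add: H_def ein_assoc)
  have AGH: "ein J A (ein J G H) = A"
  proof -
    define W where "W = A - ein J A (ein J G H)"
    have "W \<in> tensor I J"
      unfolding W_def
      by (intro diff_in_tensor A ein_in_tensor[OF A ein_in_tensor[OF G_tensor H_tensor]])
    moreover have "ein I (ctr W) W = 0"
      \<comment> \<open>ctr W * W = H - H G H - H G H + H G H G H\<close>
      using HGH GH
      by (simp add: W_def ctr_diff ein_diff_left ein_diff_right ctr_ein H_herm G_herm ein_assoc A_ctr_A
          flip: H_def)
    ultimately have "W = 0"
      by (rule ein_ctr_self_eq_0)
    then show ?thesis
      by (simp add: W_def)
  qed
  show ?thesis
    unfolding is_mp_def
  proof (intro conjI)
    show "ein J G (ctr A) \<in> tensor J I"
      by (rule ein_in_tensor[OF G_tensor ctr_in_tensor[OF A]])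
    show "ein I (ein J A (ein J G (ctr A))) A = A"
      using AGH by (simp add: ein_assoc flip: H_def)
    have XA: "ein I (ein J G (ctr A)) A = ein J G H"
      by (simp add: H_def ein_assoc)
    show "ctr (ein I (ein J G (ctr A)) A) = ein I (ein J G (ctr A)) A"
      unfolding XA by (simp add: ctr_ein H_herm G_herm GH)
    show "ein J (ein I (ein J G (ctr A)) A) (ein J G (ctr A)) = ein J G (ctr A)"
      unfolding XA using GHG by (simp flip: ein_assoc)
  qed (simp add: ctr_ein ein_assoc G_herm)
qed

lemma is_mp_exists:
  assumes A: "A \<in> tensor I J"
  shows "\<exists>X. is_mp I J A X"
proof -
  have "ein I (ctr A) A \<in> tensor J J" and "ctr (ein I (ctr A) A) = ein I (ctr A) A"
    by (simp_all add: ein_in_tensor[OF ctr_in_tensor[OF A] A] ctr_ein)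
  then obtain G where "is_mp J J (ein I (ctr A) A) G" and "ctr G = G"
    by (rule hermitian_is_mp_exists)
  then show ?thesis
    using is_mp_gram[OF A] by blast
qed

lemma mpinv_eqI: "is_mp I J A X \<Longrightarrow> mpinv I J A = X"
  unfolding mpinv_def by (rule the_equality) (auto intro: is_mp_unique)

lemma is_mp_mpinv: "A \<in> tensor I J \<Longrightarrow> is_mp I J A (mpinv I J A)"
  using is_mp_exists mpinv_eqI by metis

section \<open>The reverse order law\<close>

lemma is_mp_ein_hermitian_right:
  assumes X: "is_mp I J A X" and "ctr P = P" and "ein I P A = A"
  shows "ein I X P = X"
proof -
  have AhP: "ein I (ctr A) P = ctr A"
    using arg_cong[OF assms(3), of ctr] by (simp add: ctr_ein assms(2))
  have X_eq: "X = ein I X (ein J (ctr X) (ctr A))"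
    using X by (simp add: is_mp_def ein_assoc flip: ctr_ein)
  have "ein I X P = ein I X (ein J (ctr X) (ein I (ctr A) P))"
    by (subst X_eq) (simp only: ein_assoc)
  also have "\<dots> = X"
    by (simp only: AhP flip: X_eq)
  finally show ?thesis .
qed

lemma is_mp_ein_hermitian_left:
  assumes X: "is_mp I J A X" and "ctr P = P" and "ein J A P = A"
  shows "ein J P X = X"
proof -
  have PAh: "ein J P (ctr A) = ctr A"
    using arg_cong[OF assms(3), of ctr] by (simp add: ctr_ein assms(2))
  have X_eq: "X = ein J (ein I (ctr A) (ctr X)) X"
    using X by (simp add: is_mp_def flip: ctr_ein)
  have "ein J P X = ein J (ein I (ein J P (ctr A)) (ctr X)) X"
    by (subst X_eq) (simp only: ein_assoc)
  also have "\<dots> = X"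
    by (simp only: PAh flip: X_eq)
  finally show ?thesis .
qed

lemma is_mp_ein_sandwich:
  assumes "is_mp H J (ein I P A) X" and "is_mp I G (ein J A Q) Y"
    and "ein H R (ein I P A) = A" and "ein G (ein J A Q) T = A"
  shows "is_mp I J A (ein G (ein J (ein I (ein H X P) A) Q) Y)"
proof -
  define U V where "U = ein I P A" and "V = ein J A Q"
  from assms(1) have X: "X \<in> tensor J H" and U1: "ein H (ein J U X) U = U"
    and X2: "ein J (ein H X U) X = X" and XU_herm: "ctr (ein H X U) = ein H X U"
    by (simp_all add: is_mp_def U_def)
  from assms(2) have Y: "Y \<in> tensor G I" and V1: "ein I (ein G V Y) V = V"
    and VY_herm: "ctr (ein G V Y) = ein G V Y"
    by (simp_all add: is_mp_def V_def)
  have RU: "ein H R U = A" and VT: "ein G V T = A"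
    using assms(3,4) by (simp_all add: U_def V_def)
  define Z where "Z = ein G (ein J (ein H X U) Q) Y"
  have "ein J A (ein H X U) = ein H R (ein J U (ein H X U))"
    by (simp only: ein_assoc flip: RU)
  also have "\<dots> = A"
    using U1 RU by (simp add: ein_assoc)
  finally have AXU: "ein J A (ein H X U) = A" .
  have "ein I (ein G V Y) A = ein G (ein I (ein G V Y) V) T"
    by (simp only: ein_assoc flip: VT)
  also have "\<dots> = A"
    using V1 VT by simp
  finally have VYA: "ein I (ein G V Y) A = A" .
  have AZ: "ein J A Z = ein G V Y"
    using AXU by (simp add: Z_def V_def flip: ein_assoc)
  have ZA: "ein I Z A = ein H X U"
    using VYA by (simp add: Z_def U_def V_def ein_assoc)
  have "is_mp I J A Z"
    unfolding is_mp_def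
  proof (intro conjI)
    show "Z \<in> tensor J I"
      using X Y by (auto simp: Z_def tensor_def ein_def)
    show "ein J (ein I Z A) Z = Z"
      unfolding ZA using X2 by (simp add: Z_def flip: ein_assoc)
  qed (simp_all add: AZ ZA VYA XU_herm VY_herm)
  then show ?thesis
    by (simp add: Z_def U_def ein_assoc)
qed

theorem theorem3p5:
  fixes I H G J :: "nat list"
    and R S T :: "nat list \<Rightarrow> nat list \<Rightarrow> complex"
  assumes "R \<in> tensor I H" and "S \<in> tensor H G" and "T \<in> tensor G J"
  defines "A \<equiv> ein G (ein H R S) T"
  shows "mpinv I J A =
           ein G (ein J (ein I (ein H (mpinv H J (ein I (mpinv I H R) A)) (mpinv I H R)) A)
                    (mpinv G J T))
                 (mpinv I G (ein J A (mpinv G J T))) \<and>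
         mpinv I J A =
           ein G (ein H (mpinv H J (ein I (mpinv I H R) A)) S)
                 (mpinv I G (ein J A (mpinv G J T)))"
proof -
  have A: "A \<in> tensor I J"
    unfolding A_def by (rule ein_in_tensor[OF ein_in_tensor[OF assms(1,2)] assms(3)])
  define R' T' where "R' = mpinv I H R" and "T' = mpinv G J T"
  define X Y where "X = mpinv H J (ein I R' A)" and "Y = mpinv I G (ein J A T')"
  have R': "is_mp I H R R'" and T': "is_mp G J T T'"
    unfolding R'_def T'_def using assms(1,3) by (simp_all add: is_mp_mpinv)
  have "R' \<in> tensor H I" and "T' \<in> tensor J G"
    using R' T' by (simp_all add: is_mp_def)
  then have X: "is_mp H J (ein I R' A) X" and Y: "is_mp I G (ein J A T') Y"
    using A by (simp_all add: X_def Y_def is_mp_mpinv ein_in_tensor[of _ H I] ein_in_tensor[of _ I J])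
  have "ein H R (ein I R' A) = A"
    using R' by (simp add: A_def is_mp_def flip: ein_assoc)
  moreover have "ein G (ein J A T') T = A"
    using T' by (simp add: A_def is_mp_def ein_assoc)
  ultimately have mpinv_A: "mpinv I J A = ein G (ein J (ein I (ein H X R') A) T') Y"
    by (intro mpinv_eqI is_mp_ein_sandwich[OF X Y])
  have XR'R: "ein H X (ein I R' R) = X"
    using R' by (intro is_mp_ein_hermitian_right[OF X]) (simp_all add: is_mp_def flip: ein_assoc)
  have TT'Y: "ein G (ein J T T') Y = Y"
    using T' by (intro is_mp_ein_hermitian_left[OF Y]) (simp_all add: is_mp_def ein_assoc)
  have "ein G (ein J (ein I (ein H X R') A) T') Y
      = ein G (ein H (ein H X (ein I R' R)) S) (ein G (ein J T T') Y)"
    by (simp add: A_def ein_assoc)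
  also have "\<dots> = ein G (ein H X S) Y"
    by (simp only: XR'R TT'Y)
  finally show ?thesis
    using mpinv_A by (simp add: X_def Y_def R'_def T'_def)
qed

end
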